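(* Let $p \in (0,1)$, $m \geq 2$, and let $f : \{0,1\}^m \to \{0,1\}$. Let $\pi : [m] \to [m-1]$ be the map with $\pi(m-1) = \pi(m) = m-1$ and $\pi(i) = i$ for every $i \in [m-2]$. Then \[ \mathrm{Inf}^{(p)}[f^\pi, m-1] \geq \min(p,1-p) \cdot \mathrm{Inf}^{(p)}[f, m-1] - \frac{1}{\min(p,1-p)} \cdot \mathrm{Inf}^{(p)}[f, m]. \]
   Context: For $p \in (0,1)$, $\mu_{p,n}$ is the product $p$-biased distribution on $\{0,1\}^n$. For $g : \{0,1\}^n \to \{0,1\}$ and $i \in [n]$, $\mathrm{Inf}^{(p)}[g,i] = \mathbb{E}_{x \sim \mu_{p,n}}\big[(g(x) - \mathbb{E}_{s\sim\mu_{p,1}}[g(x^{i\to s})])^2\big] = p(1-p)\Pr_{x\sim\mu_{p,n}}[g(x)\neq g(x\oplus i)]$, where $x^{i\to s}$ is $x$ with coordinate $i$ set to $s$ and $x\oplus i$ is $x$ with coordinate $i$ flipped. For $\pi:[m]\to[k]$, the minor $f^\pi:\{0,1\}^k\to\{0,1\}$ is $f^\pi(y) = f(y_{\pi(1)},\dots,y_{\pi(m)})$. Influences of $f^\pi$ are taken with respect to $\mu_{p,m-1}$ and those of $f$ with respect to $\mu_{p,m}$. *)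

theory Defs
  imports "HOL-Analysis.Analysis"
begin

text \<open>Points of the cube {0,1}^n are encoded as functions nat => bool that are
  False outside the coordinate set {1..n} (True = 1, False = 0).\<close>

definition cube :: "nat \<Rightarrow> (nat \<Rightarrow> bool) set" where
  "cube n = {x. \<forall>i. x i \<longrightarrow> i \<in> {1..n}}"

definition pweight :: "real \<Rightarrow> nat \<Rightarrow> (nat \<Rightarrow> bool) \<Rightarrow> real" where
  "pweight p n x = (\<Prod>i\<in>{1..n}. if x i then p else 1 - p)"

definition pexp :: "real \<Rightarrow> nat \<Rightarrow> ((nat \<Rightarrow> bool) \<Rightarrow> real) \<Rightarrow> real" where
  "pexp p n F = (\<Sum>x\<in>cube n. pweight p n x * F x)"

definition bval :: "bool \<Rightarrow> real" where
  "bval b = (if b then 1 else 0)"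

definition pinf :: "real \<Rightarrow> nat \<Rightarrow> ((nat \<Rightarrow> bool) \<Rightarrow> bool) \<Rightarrow> nat \<Rightarrow> real" where
  "pinf p n g i = pexp p n (\<lambda>x. (bval (g x)
      - (p * bval (g (x(i := True))) + (1 - p) * bval (g (x(i := False)))))\<^sup>2)"

definition minor :: "nat \<Rightarrow> ((nat \<Rightarrow> bool) \<Rightarrow> bool) \<Rightarrow> (nat \<Rightarrow> nat) \<Rightarrow> (nat \<Rightarrow> bool) \<Rightarrow> bool" where
  "minor m f \<pi> y = f (\<lambda>i. if i \<in> {1..m} then y (\<pi> i) else False)"

end

theory Submission
  imports Defs
begin

text \<open>Let A s t be f with coordinates m-1 and m set to s and t, and q = min p (1-p).
  Up to the common factor p(1-p), the influence of the merged coordinate of f^\<pi> is the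
  probability that A 1 1 and A 0 0 differ, while Inf[f,m-1] and Inf[f,m] are the
  p-weighted probabilities that A is non-constant along the edges of the square {0,1}^2
  in the first, respectively second, direction. If A 1 1 = A 0 0 but an edge in the first
  direction is non-constant, then so is the edge in the second direction through its
  off-diagonal endpoint, and each edge weight is at least q. Hence pointwise
  q * (first-direction edges) - (second-direction edges) / q \<le> (diagonal),
  and the theorem follows by taking expectations.\<close>

lemma finite_cube: "finite (cube n)"
proof -
  have "cube n \<subseteq> (\<lambda>S i. i \<in> S) ` Pow {1..n}"
  proof
    fix x assume "x \<in> cube n"
    then have "x = (\<lambda>i. i \<in> {i. x i})" "{i. x i} \<in> Pow {1..n}"
      by (auto simp: cube_def)
    then show "x \<in> (\<lambda>S i. i \<in> S) ` Pow {1..n}" by blast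
  qed
  then show ?thesis by (rule finite_subset) simp
qed

lemma cube_outside: "x \<in> cube n \<Longrightarrow> i \<notin> {1..n} \<Longrightarrow> \<not> x i"
  by (auto simp: cube_def)

lemma fun_upd_in_cube_Suc: "x \<in> cube n \<Longrightarrow> x(Suc n := b) \<in> cube (Suc n)"
  by (auto simp: cube_def)

lemma cube_Suc:
  "cube (Suc n) = (\<lambda>x. x(Suc n := True)) ` cube n \<union> (\<lambda>x. x(Suc n := False)) ` cube n"
proof (intro equalityI subsetI)
  fix x assume "x \<in> cube (Suc n)"
  then have "x(Suc n := False) \<in> cube n"
    by (auto simp: cube_def le_Suc_eq)
  then have "x \<in> (\<lambda>y. y(Suc n := x (Suc n))) ` cube n"
    by (rule rev_image_eqI) simp
  then show "x \<in> (\<lambda>x. x(Suc n := True)) ` cube n \<union> (\<lambda>x. x(Suc n := False)) ` cube n"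
    by (cases "x (Suc n)") simp_all
qed (auto intro: fun_upd_in_cube_Suc)

lemma inj_on_fun_upd_cube: "inj_on (\<lambda>x. x(Suc n := b)) (cube n)"
proof (rule inj_onI)
  fix x y assume "x \<in> cube n" "y \<in> cube n" and eq: "x(Suc n := b) = y(Suc n := b)"
  then have "x (Suc n) = y (Suc n)"
    by (simp add: cube_outside)
  then have "(x(Suc n := b))(Suc n := x (Suc n)) = (y(Suc n := b))(Suc n := y (Suc n))"
    by (simp only: eq)
  then show "x = y"
    by simp
qed

lemma pweight_fun_upd_Suc:
  "pweight p (Suc n) (x(Suc n := b)) = (if b then p else 1 - p) * pweight p n x"
  unfolding pweight_def by (simp add: prod.cl_ivl_Suc)

lemma pweight_nonneg: "0 \<le> p \<Longrightarrow> p \<le> 1 \<Longrightarrow> 0 \<le> pweight p n x"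
  unfolding pweight_def by (rule prod_nonneg) auto

lemma pexp_Suc:
  "pexp p (Suc n) F = p * pexp p n (\<lambda>x. F (x(Suc n := True)))
     + (1 - p) * pexp p n (\<lambda>x. F (x(Suc n := False)))"
proof -
  have disjoint: "(\<lambda>x. x(Suc n := True)) ` cube n \<inter> (\<lambda>x. x(Suc n := False)) ` cube n = {}"
    by (auto dest: fun_cong[where x = "Suc n"])
  have "pexp p (Suc n) F = (\<Sum>x\<in>cube n. pweight p (Suc n) (x(Suc n := True)) * F (x(Suc n := True)))
      + (\<Sum>x\<in>cube n. pweight p (Suc n) (x(Suc n := False)) * F (x(Suc n := False)))"
    unfolding pexp_def cube_Suc
    by (simp add: sum.union_disjoint finite_cube disjoint sum.reindex inj_on_fun_upd_cube)
  then show ?thesis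
    by (simp add: pexp_def pweight_fun_upd_Suc sum_distrib_left mult.assoc)
qed

lemma pexp_add: "pexp p n (\<lambda>x. F x + G x) = pexp p n F + pexp p n G"
  unfolding pexp_def by (simp add: sum.distrib distrib_left)

lemma pexp_diff: "pexp p n (\<lambda>x. F x - G x) = pexp p n F - pexp p n G"
  unfolding pexp_def by (simp add: sum_subtractf right_diff_distrib)

lemma pexp_divide: "pexp p n (\<lambda>x. F x / c) = pexp p n F / c"
  unfolding pexp_def by (simp add: sum_divide_distrib)

lemma pexp_cmult: "pexp p n (\<lambda>x. c * F x) = c * pexp p n F"
  unfolding pexp_def by (simp add: sum_distrib_left mult.left_commute)

lemma pexp_mono:
  "0 \<le> p \<Longrightarrow> p \<le> 1 \<Longrightarrow> (\<And>x. x \<in> cube n \<Longrightarrow> F x \<le> G x) \<Longrightarrow> pexp p n F \<le> pexp p n G"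
  unfolding pexp_def by (rule sum_mono) (simp add: mult_left_mono pweight_nonneg)

lemma pexp_cong: "(\<And>x. x \<in> cube n \<Longrightarrow> F x = G x) \<Longrightarrow> pexp p n F = pexp p n G"
  unfolding pexp_def by (rule sum.cong) auto

lemma pinf_cong:
  assumes "\<And>x. x \<in> cube n \<Longrightarrow> g x = h x" and "i \<in> {1..n}"
  shows "pinf p n g i = pinf p n h i"
proof -
  have "x(i := b) \<in> cube n" if "x \<in> cube n" for x b
    using that assms(2) by (auto simp: cube_def)
  then show ?thesis
    unfolding pinf_def by (intro pexp_cong) (simp add: assms(1))
qed

lemma pinf_last:
  "pinf p (Suc n) g (Suc n)
     = p * (1 - p) * pexp p n (\<lambda>x. bval (g (x(Suc n := True)) \<noteq> g (x(Suc n := False))))"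
proof -
  have "p * (bval a - (p * bval a + (1 - p) * bval b))\<^sup>2
      + (1 - p) * (bval b - (p * bval a + (1 - p) * bval b))\<^sup>2 = p * (1 - p) * bval (a \<noteq> b)"
    for a b
    by (cases a; cases b) (simp_all add: bval_def power2_eq_square algebra_simps)
  then show ?thesis
    unfolding pinf_def pexp_Suc by (simp flip: pexp_cmult pexp_add)
qed

lemma pinf_Suc:
  "i \<noteq> Suc n \<Longrightarrow> pinf p (Suc n) g i
     = p * pinf p n (\<lambda>x. g (x(Suc n := True))) i + (1 - p) * pinf p n (\<lambda>x. g (x(Suc n := False))) i"
  unfolding pinf_def pexp_Suc by (simp add: fun_upd_twist)

lemma square_edges_vs_diagonal:
  fixes a11 a01 a10 a00 :: bool
  assumes p: "0 \<le> p" "p \<le> 1" and q: "0 < q" "q \<le> p" "q \<le> 1 - p"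
  shows "q * (p * bval (a11 \<noteq> a01) + (1 - p) * bval (a10 \<noteq> a00))
     - (p * bval (a11 \<noteq> a10) + (1 - p) * bval (a01 \<noteq> a00)) / q \<le> bval (a11 \<noteq> a00)"
proof -
  define vertical where "vertical = p * bval (a11 \<noteq> a01) + (1 - p) * bval (a10 \<noteq> a00)"
  define horizontal where "horizontal = p * bval (a11 \<noteq> a10) + (1 - p) * bval (a01 \<noteq> a00)"
  have "0 \<le> vertical" "vertical \<le> 1" "0 \<le> horizontal"
    using p by (auto simp: vertical_def horizontal_def bval_def)
  then have bound: "q * vertical \<le> 1" "0 \<le> horizontal / q"
    using q by (auto intro: mult_le_one)
  have "q * vertical \<le> horizontal / q" if "a11 = a00" "vertical \<noteq> 0"
  proof -
    have "q \<le> horizontal"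
      using that q unfolding vertical_def horizontal_def
      by (cases a11; cases a01; cases a10) (auto simp: bval_def)
    moreover have "q * vertical * q \<le> q"
      using mult_right_mono[OF bound(1), of q] q by simp
    ultimately show ?thesis
      using q by (simp only: pos_le_divide_eq)
  qed
  then show ?thesis
    using bound by (fold vertical_def horizontal_def) (cases "vertical = 0"; auto simp: bval_def)
qed

lemma pinf_merge_last_two:
  assumes p: "0 < p" "p < 1"
  defines "q \<equiv> min p (1 - p)"
  shows "q * pinf p (Suc (Suc n)) g (Suc n) - pinf p (Suc (Suc n)) g (Suc (Suc n)) / q
     \<le> pinf p (Suc n) (\<lambda>y. g (y(Suc (Suc n) := y (Suc n)))) (Suc n)"
proof -
  define A where "A s t x = g (x(Suc n := s, Suc (Suc n) := t))" for s t x
  define d where "d s t s' t' = pexp p n (\<lambda>x. bval (A s t x \<noteq> A s' t' x))" for s t s' t'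
  define diagonal where "diagonal = d True True False False"
  define vertical where "vertical = p * d True True False True + (1 - p) * d True False False False"
  define horizontal where "horizontal = p * d True True True False + (1 - p) * d False True False False"
  have merged: "pinf p (Suc n) (\<lambda>y. g (y(Suc (Suc n) := y (Suc n)))) (Suc n) = p * (1 - p) * diagonal"
    by (simp add: pinf_last diagonal_def d_def A_def)
  have second_last: "pinf p (Suc (Suc n)) g (Suc n) = p * (1 - p) * vertical"
    by (simp add: pinf_Suc pinf_last vertical_def d_def A_def algebra_simps)
  have last: "pinf p (Suc (Suc n)) g (Suc (Suc n)) = p * (1 - p) * horizontal"
    by (simp add: pinf_last pexp_Suc horizontal_def d_def A_def)
  have "q * vertical - horizontal / q
      = pexp p n (\<lambda>x. q * (p * bval (A True True x \<noteq> A False True x)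
          + (1 - p) * bval (A True False x \<noteq> A False False x))
        - (p * bval (A True True x \<noteq> A True False x)
          + (1 - p) * bval (A False True x \<noteq> A False False x)) / q)"
    by (simp only: vertical_def horizontal_def d_def pexp_diff pexp_divide pexp_add pexp_cmult)
  also have "\<dots> \<le> diagonal"
    unfolding diagonal_def d_def using p
    by (intro pexp_mono square_edges_vs_diagonal) (auto simp: q_def)
  finally have "p * (1 - p) * (q * vertical - horizontal / q) \<le> p * (1 - p) * diagonal"
    using p by (intro mult_left_mono) auto
  then show ?thesis
    unfolding merged second_last last by (simp add: right_diff_distrib mult.left_commute)
qed

lemma minor_merge_last_two:
  assumes "\<pi> (Suc (Suc n)) = Suc n" "\<pi> (Suc n) = Suc n" "\<forall>i\<in>{1..n}. \<pi> i = i"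
    and "y \<in> cube (Suc n)"
  shows "minor (Suc (Suc n)) f \<pi> y = f (y(Suc (Suc n) := y (Suc n)))"
proof -
  have "(if i \<in> {1..Suc (Suc n)} then y (\<pi> i) else False) = (y(Suc (Suc n) := y (Suc n))) i" for i
    using assms cube_outside[OF assms(4), of i] by (auto simp: le_Suc_eq)
  then show ?thesis
    unfolding minor_def by presburger
qed

theorem mainTheorem3:
  fixes p :: real and m :: nat and f :: "(nat \<Rightarrow> bool) \<Rightarrow> bool" and \<pi> :: "nat \<Rightarrow> nat"
  assumes "0 < p" and "p < 1" and "m \<ge> 2"
    and "\<pi> m = m - 1" and "\<pi> (m - 1) = m - 1" and "\<forall>i\<in>{1..m-2}. \<pi> i = i"
  shows "pinf p (m - 1) (minor m f \<pi>) (m - 1)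
           \<ge> min p (1 - p) * pinf p m f (m - 1) - (1 / min p (1 - p)) * pinf p m f m"
proof -
  obtain n where m: "m = Suc (Suc n)"
    using \<open>m \<ge> 2\<close> by (metis add_2_eq_Suc le_Suc_ex)
  have "minor m f \<pi> y = f (y(Suc (Suc n) := y (Suc n)))" if "y \<in> cube (Suc n)" for y
    using assms(4-6) that unfolding m by (intro minor_merge_last_two) auto
  then have "pinf p (m - 1) (minor m f \<pi>) (m - 1)
      = pinf p (Suc n) (\<lambda>y. f (y(Suc (Suc n) := y (Suc n)))) (Suc n)"
    unfolding m diff_Suc_1 by (intro pinf_cong) auto
  then show ?thesis
    using pinf_merge_last_two[OF assms(1,2), of n f] unfolding m by simp
qed

end
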